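(* Let $p\ge 1$, let $n_1,\dots,n_p\ge1$ and $k_s\in[n_s]$ for each $s$. If there exists a non-trivially intersecting family $\mathcal{F}\subseteq\prod_{s}\binom{[n_s]}{k_s}$, then there exists a non-trivially intersecting family $\mathcal{F}'\subseteq\prod_{s}\binom{[n_s]}{k_s}$ of maximum size (among all non-trivially intersecting subfamilies of $\prod_{s}\binom{[n_s]}{k_s}$) which is shifted.
   Context: Multi-part setting: the ground set is the disjoint union $\bigsqcup_{s=1}^p [n_s]$ of $p$ parts, where $[n]=\{1,\dots,n\}$. For $F_s\subseteq[n_s]$, $\bigsqcup_s F_s$ denotes the subset of the ground set having $F_s$ in part $s$; $\prod_{s}\binom{[n_s]}{k_s}$ is the collection of all sets $\bigsqcup_s F_s$ with $|F_s|=k_s$ for all $s$. A family is intersecting if any two of its sets intersect (in some part); trivially intersecting if some element (in some part) lies in all of its sets; non-trivially intersecting if intersecting but not trivially intersecting. Shifting: for $t\in[p]$, $1\le i<j\le n_t$ and $F=\bigsqcup_s F_s\in\prod_s\binom{[n_s]}{k_s}$, define $S_t^{i,j}(F)=F$ if $i\in F_t$ or $j\notin F_t$, and otherwise $S_t^{i,j}(F)$ is obtained from $F$ by replacing $F_t$ with $(F_t\setminus\{j\})\cup\{i\}$. For a family $\mathcal F\subseteq\prod_s\binom{[n_s]}{k_s}$, define $S_t^{i,j}(\mathcal F)=\{S_t^{i,j}(F):F\in\mathcal F\}\cup\{F: F\in\mathcal F \text{ and } S_t^{i,j}(F)\in\mathcal F\}$ (a $t$-shift of $\mathcal F$). $\mathcal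 F$ is $t$-shifted if $S_t^{i,j}(\mathcal F)=\mathcal F$ for all $1\le i<j\le n_t$, and shifted if it is $t$-shifted for every $t\in[p]$. *)

theory Defs
  imports Main
begin

text \<open>Ground set: disjoint union of parts [n_s], s = 1..p, encoded as pairs (s, x)
  with 1 \<le> s \<le> p and 1 \<le> x \<le> n s.\<close>

definition ground :: "nat \<Rightarrow> (nat \<Rightarrow> nat) \<Rightarrow> (nat \<times> nat) set" where
  "ground p n = {(s, x). s \<in> {1..p} \<and> x \<in> {1..n s}}"

definition part :: "(nat \<times> nat) set \<Rightarrow> nat \<Rightarrow> nat set" where
  "part F s = {x. (s, x) \<in> F}"

definition prodBinom :: "nat \<Rightarrow> (nat \<Rightarrow> nat) \<Rightarrow> (nat \<Rightarrow> nat) \<Rightarrow> (nat \<times> nat) set set" where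
  "prodBinom p n k = {F. F \<subseteq> ground p n \<and> (\<forall>s\<in>{1..p}. card (part F s) = k s)}"

definition intersecting :: "(nat \<times> nat) set set \<Rightarrow> bool" where
  "intersecting \<F> \<longleftrightarrow> (\<forall>A\<in>\<F>. \<forall>B\<in>\<F>. A \<inter> B \<noteq> {})"

definition trivially_intersecting :: "nat \<Rightarrow> (nat \<Rightarrow> nat) \<Rightarrow> (nat \<times> nat) set set \<Rightarrow> bool" where
  "trivially_intersecting p n \<F> \<longleftrightarrow> (\<exists>e\<in>ground p n. \<forall>A\<in>\<F>. e \<in> A)"

definition nontrivially_intersecting :: "nat \<Rightarrow> (nat \<Rightarrow> nat) \<Rightarrow> (nat \<times> nat) set set \<Rightarrow> bool" where
  "nontrivially_intersecting p n \<F> \<longleftrightarrow> intersecting \<F> \<and> \<not> trivially_intersecting p n \<F>"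

definition shift_set :: "nat \<Rightarrow> nat \<Rightarrow> nat \<Rightarrow> (nat \<times> nat) set \<Rightarrow> (nat \<times> nat) set" where
  "shift_set t i j F = (if i \<in> part F t \<or> j \<notin> part F t then F
                        else (F - {(t, j)}) \<union> {(t, i)})"

definition shift_family :: "nat \<Rightarrow> nat \<Rightarrow> nat \<Rightarrow> (nat \<times> nat) set set \<Rightarrow> (nat \<times> nat) set set" where
  "shift_family t i j \<F> = shift_set t i j ` \<F> \<union> {F \<in> \<F>. shift_set t i j F \<in> \<F>}"

definition t_shifted :: "(nat \<Rightarrow> nat) \<Rightarrow> nat \<Rightarrow> (nat \<times> nat) set set \<Rightarrow> bool" where
  "t_shifted n t \<F> \<longleftrightarrow> (\<forall>i j. 1 \<le> i \<and> i < j \<and> j \<le> n t \<longrightarrow> shift_family t i j \<F> = \<F>)"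

definition shifted :: "nat \<Rightarrow> (nat \<Rightarrow> nat) \<Rightarrow> (nat \<times> nat) set set \<Rightarrow> bool" where
  "shifted p n \<F> \<longleftrightarrow> (\<forall>t\<in>{1..p}. t_shifted n t \<F>)"

end

theory Submission
  imports Defs "HOL-Combinatorics.Transposition"
begin

text \<open>
  Weigh a set by the sum of its coordinates and, among the non-trivially intersecting families of
  maximum size, take one of least total weight. A shift that changes it yields an intersecting
  family of the same size and smaller weight, which must therefore be trivially intersecting, with
  centre the element shifted to; maximality and minimality together force such a shift to act on
  a part with k_t = 1 and to exchange the elements 1 and 2 only. On these parts a member is
  described by the set of parts where it takes the value 1; minimality of the weight rules out two
  members whose descriptions differ in a single part, and swapping 1 and 2 on all these parts for
  the members with few 1s again produces a lighter family of maximum size whose centre leads to a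
  contradiction. Hence no shift changes the family.
\<close>

lemma mem_part_iff [simp]: "x \<in> part A s \<longleftrightarrow> (s, x) \<in> A"
  by (simp add: part_def)

lemma part_eq_singleton_iff: "part A t = {c} \<longleftrightarrow> (\<forall>x. (t, x) \<in> A \<longleftrightarrow> x = c)"
  by (auto simp: set_eq_iff)

lemma finite_ground: "finite (ground p n)"
proof -
  have "ground p n = Sigma {1..p} (\<lambda>s. {1..n s})"
    by (auto simp: ground_def)
  then show ?thesis by simp
qed

lemma finite_prodBinom: "finite (prodBinom p n k)"
  by (rule finite_subset[of _ "Pow (ground p n)"]) (auto simp: prodBinom_def finite_ground)

lemma prodBinom_memD:
  assumes "A \<in> prodBinom p n k" and "(s, x) \<in> A"
  shows "s \<in> {1..p}" and "x \<in> {1..n s}"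
  using assms by (auto simp: prodBinom_def ground_def)

lemma prodBinom_card_part: "A \<in> prodBinom p n k \<Longrightarrow> s \<in> {1..p} \<Longrightarrow> card (part A s) = k s"
  by (simp add: prodBinom_def)

lemma finite_prodBinom_member: "A \<in> prodBinom p n k \<Longrightarrow> finite A"
  unfolding prodBinom_def using finite_subset[OF _ finite_ground] by blast

lemma finite_part_prodBinom: "A \<in> prodBinom p n k \<Longrightarrow> finite (part A s)"
  by (rule finite_subset[of _ "{1..n s}"]) (auto dest: prodBinom_memD)

lemma prodBinom_ex_differing_elements:
  assumes A: "A \<in> prodBinom p n k" and B: "B \<in> prodBinom p n k" and "A \<noteq> B"
  obtains s a b where "(s, a) \<in> A" "(s, a) \<notin> B" "(s, b) \<in> B" "(s, b) \<notin> A"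
proof -
  obtain s where ne: "part A s \<noteq> part B s"
    using \<open>A \<noteq> B\<close> by (auto simp: set_eq_iff)
  then have "s \<in> {1..p}"
    using prodBinom_memD(1)[OF A] prodBinom_memD(1)[OF B] by (fastforce simp: set_eq_iff)
  then have "card (part A s) = card (part B s)"
    using prodBinom_card_part[OF A] prodBinom_card_part[OF B] by simp
  then have "\<not> part A s \<subseteq> part B s" "\<not> part B s \<subseteq> part A s"
    using ne card_subset_eq[OF finite_part_prodBinom[OF B]]
      card_subset_eq[OF finite_part_prodBinom[OF A]]
    by metis+
  then show thesis using that by (auto simp: subset_iff)
qed

lemma ex_prodBinom_between:
  assumes "\<forall>s\<in>{1..p}. I s \<subseteq> E s \<and> E s \<subseteq> {1..n s} \<and> card (I s) \<le> k s \<and> k s \<le> card (E s)"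
  obtains X where "X \<in> prodBinom p n k" "\<forall>s\<in>{1..p}. I s \<subseteq> part X s \<and> part X s \<subseteq> E s"
proof -
  have "\<exists>Y. I s \<subseteq> Y \<and> Y \<subseteq> E s \<and> card Y = k s" if s: "s \<in> {1..p}" for s
  proof -
    have IE: "I s \<subseteq> E s" and "E s \<subseteq> {1..n s}" and I_k: "card (I s) \<le> k s"
      and k_E: "k s \<le> card (E s)"
      using assms s by auto
    then have fin: "finite (E s)" "finite (I s)"
      by (auto intro: finite_subset)
    then have "k s - card (I s) \<le> card (E s - I s)"
      using k_E card_Diff_subset[OF _ IE] by simp
    then obtain Z where Z: "Z \<subseteq> E s - I s" "card Z = k s - card (I s)"
      by (rule obtain_subset_with_card_n)
    have "finite Z" "I s \<inter> Z = {}"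
      using Z(1) fin by (auto intro: finite_subset)
    then have "card (I s \<union> Z) = k s"
      using Z(2) I_k fin by (simp add: card_Un_disjoint)
    then show ?thesis using Z(1) IE by (intro exI[of _ "I s \<union> Z"]) blast
  qed
  then obtain Y where Y: "\<forall>s\<in>{1..p}. I s \<subseteq> Y s \<and> Y s \<subseteq> E s \<and> card (Y s) = k s"
    by (metis (no_types))
  define X where "X = {(s, x). s \<in> {1..p} \<and> x \<in> Y s}"
  have part_X: "part X s = Y s" if "s \<in> {1..p}" for s
    using that by (auto simp: X_def)
  have "X \<subseteq> ground p n"
    using Y assms unfolding X_def ground_def by blast
  then have "X \<in> prodBinom p n k"
    using Y part_X by (simp add: prodBinom_def)
  then show thesis using that Y part_X by simp
qed

lemma shift_set_moved:
  assumes "shift_set t i j A \<noteq> A"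
  shows "(t, i) \<notin> A" "(t, j) \<in> A" "shift_set t i j A = insert (t, i) (A - {(t, j)})"
  using assms by (auto simp: shift_set_def split: if_splits)

lemma shift_set_exchange:
  "(t, j) \<in> A \<Longrightarrow> (t, i) \<notin> A \<Longrightarrow> shift_set t i j A = insert (t, i) (A - {(t, j)})"
  by (simp add: shift_set_def)

lemma shift_set_idem: "i \<noteq> j \<Longrightarrow> shift_set t i j (shift_set t i j A) = shift_set t i j A"
  by (auto simp: shift_set_def)

lemma shift_set_subset: "shift_set t i j A \<subseteq> insert (t, i) A"
  by (auto simp: shift_set_def)

lemma shift_set_supset: "A - {(t, j)} \<subseteq> shift_set t i j A"
  by (auto simp: shift_set_def)

lemma shift_set_target: "(t, j) \<in> A \<Longrightarrow> (t, i) \<in> shift_set t i j A"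
  by (auto simp: shift_set_def)

lemma shift_set_source: "(t, j) \<in> shift_set t i j A \<Longrightarrow> (t, i) \<in> A"
  by (cases "i = j") (auto simp: shift_set_def split: if_splits)

lemma shift_set_Int_shift_set:
  assumes "A \<inter> B \<noteq> {}"
  shows "shift_set t i j A \<inter> shift_set t i j B \<noteq> {}"
proof -
  obtain e where e: "e \<in> A" "e \<in> B" using assms by blast
  show ?thesis
  proof (cases "e = (t, j)")
    case True
    then show ?thesis using e shift_set_target by blast
  next
    case False
    then show ?thesis using e shift_set_supset by blast
  qed
qed

lemma shift_set_Int:
  assumes "A \<inter> B \<noteq> {}" "A \<inter> shift_set t i j B \<noteq> {}"
  shows "shift_set t i j A \<inter> B \<noteq> {}"
proof (cases "(t, i) \<in> A")
  case True
  then show ?thesis using assms(1) by (simp add: shift_set_def)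
next
  case False
  obtain f where f: "f \<in> A" "f \<in> shift_set t i j B" using assms(2) by blast
  then have "f \<in> B" using False shift_set_subset by blast
  show ?thesis
  proof (cases "f = (t, j)")
    case True
    then show ?thesis using f shift_set_source shift_set_target by blast
  next
    case False
    then show ?thesis using f \<open>f \<in> B\<close> shift_set_supset by blast
  qed
qed

lemma shift_set_prodBinom:
  assumes A: "A \<in> prodBinom p n k" and t: "t \<in> {1..p}" and i: "i \<in> {1..n t}" and "i \<noteq> j"
  shows "shift_set t i j A \<in> prodBinom p n k"
proof (cases "shift_set t i j A = A")
  case False
  note moved = shift_set_moved[OF False]
  have "card (part (shift_set t i j A) s) = k s" if s: "s \<in> {1..p}" for s
  proof (cases "s = t")
    case True
    have "part (shift_set t i j A) s = insert i (part A t - {j})"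
      unfolding moved(3) True using \<open>i \<noteq> j\<close> by (auto simp del: mem_part_iff simp: part_def)
    moreover have "Suc (card (part A t - {j})) = card (part A t)"
      using card_Suc_Diff1[OF finite_part_prodBinom[OF A], of j] moved(2) by simp
    ultimately show ?thesis
      using moved(1) True finite_part_prodBinom[OF A] prodBinom_card_part[OF A t] by simp
  next
    case False
    then have "part (shift_set t i j A) s = part A s" using moved by auto
    then show ?thesis using prodBinom_card_part[OF A s] by simp
  qed
  moreover have "shift_set t i j A \<subseteq> ground p n"
    using A t i unfolding moved(3) prodBinom_def ground_def by blast
  ultimately show ?thesis by (simp add: prodBinom_def)
qed (use A in simp)

definition set_weight :: "(nat \<times> nat) set \<Rightarrow> nat" where
  "set_weight A = (\<Sum>e\<in>A. snd e)"

definition family_weight :: "(nat \<times> nat) set set \<Rightarrow> nat" where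
  "family_weight \<F> = (\<Sum>A\<in>\<F>. set_weight A)"

lemma set_weight_shift_set:
  assumes "finite A" "(t, j) \<in> A" "(t, i) \<notin> A"
  shows "set_weight (shift_set t i j A) + j = set_weight A + i"
  using assms by (simp add: set_weight_def shift_set_exchange sum.remove)

lemma card_replace_subfamily:
  assumes "finite \<F>" "\<H> \<subseteq> \<F>" "inj_on \<phi> \<H>" "\<phi> ` \<H> \<inter> \<F> = {}"
  shows "card ((\<F> - \<H>) \<union> \<phi> ` \<H>) = card \<F>"
proof -
  have "finite \<H>" using assms(1,2) by (rule finite_subset[rotated])
  then have "card ((\<F> - \<H>) \<union> \<phi> ` \<H>) = card (\<F> - \<H>) + card \<H>"
    using assms by (subst card_Un_disjoint) (auto simp: card_image)
  also have "\<dots> = card \<F>"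
    using assms(1,2) \<open>finite \<H>\<close> by (simp add: card_Diff_subset card_mono)
  finally show ?thesis .
qed

lemma family_weight_replace_less:
  assumes "finite \<F>" "\<H> \<subseteq> \<F>" "inj_on \<phi> \<H>" "\<phi> ` \<H> \<inter> \<F> = {}" "\<H> \<noteq> {}"
    and lighter: "\<And>A. A \<in> \<H> \<Longrightarrow> set_weight (\<phi> A) < set_weight A"
  shows "family_weight ((\<F> - \<H>) \<union> \<phi> ` \<H>) < family_weight \<F>"
proof -
  have fin: "finite \<H>" using assms(1,2) by (rule finite_subset[rotated])
  have "family_weight ((\<F> - \<H>) \<union> \<phi> ` \<H>) = family_weight (\<F> - \<H>) + (\<Sum>A\<in>\<H>. set_weight (\<phi> A))"
    using assms(1-4) fin unfolding family_weight_def
    by (subst sum.union_disjoint) (auto simp: sum.reindex)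
  also have "\<dots> < family_weight (\<F> - \<H>) + (\<Sum>A\<in>\<H>. set_weight A)"
    using sum_strict_mono[OF fin \<open>\<H> \<noteq> {}\<close> lighter] by simp
  also have "\<dots> = family_weight \<F>"
    using assms(1,2) unfolding family_weight_def by (simp add: sum.subset_diff)
  finally show ?thesis .
qed

lemma exchange_closed_pair_empty:
  fixes \<A> \<B> :: "(nat \<times> nat) set set"
  assumes "finite \<A>" "finite \<B>" "\<forall>A\<in>\<A> \<union> \<B>. finite A"
    and closed: "\<And>A B. A \<in> \<A> \<Longrightarrow> B \<in> \<B> \<Longrightarrow> \<exists>s a b.
      (s, a) \<in> A \<and> (s, a) \<notin> B \<and> (s, b) \<in> B \<and> (s, b) \<notin> A \<and>
      (b < a \<longrightarrow> shift_set s b a A \<in> \<A>) \<and> (a < b \<longrightarrow> shift_set s a b B \<in> \<B>)"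
  shows "\<A> = {} \<or> \<B> = {}"
proof (rule ccontr)
  assume "\<not> (\<A> = {} \<or> \<B> = {})"
  then obtain A B where "is_arg_min set_weight (\<lambda>A. A \<in> \<A>) A" "is_arg_min set_weight (\<lambda>B. B \<in> \<B>) B"
    using ex_is_arg_min_if_finite assms(1,2) by metis
  then have A: "A \<in> \<A>" "\<forall>A'\<in>\<A>. set_weight A \<le> set_weight A'"
    and B: "B \<in> \<B>" "\<forall>B'\<in>\<B>. set_weight B \<le> set_weight B'"
    by (auto simp: is_arg_min_def not_less)
  obtain s a b where ab: "(s, a) \<in> A" "(s, a) \<notin> B" "(s, b) \<in> B" "(s, b) \<notin> A"
    and closed_A: "b < a \<longrightarrow> shift_set s b a A \<in> \<A>"
    and closed_B: "a < b \<longrightarrow> shift_set s a b B \<in> \<B>"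
    using closed[OF A(1) B(1)] by blast
  have fin: "finite A" "finite B" using assms(3) A(1) B(1) by blast+
  have "a \<noteq> b" using ab by blast
  then consider "b < a" | "a < b" by linarith
  then show False
  proof cases
    case 1
    then have "set_weight A \<le> set_weight (shift_set s b a A)" using A(2) closed_A by blast
    moreover have "set_weight (shift_set s b a A) + a = set_weight A + b"
      by (rule set_weight_shift_set[OF fin(1) ab(1,4)])
    ultimately show False using 1 by linarith
  next
    case 2
    then have "set_weight B \<le> set_weight (shift_set s a b B)" using B(2) closed_B by blast
    moreover have "set_weight (shift_set s a b B) + b = set_weight B + a"
      by (rule set_weight_shift_set[OF fin(2) ab(3,2)])
    ultimately show False using 2 by linarith
  qed
qed

definition shift_movers :: "nat \<Rightarrow> nat \<Rightarrow> nat \<Rightarrow> (nat \<times> nat) set set \<Rightarrow> (nat \<times> nat) set set" where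
  "shift_movers t i j \<F> = {A \<in> \<F>. shift_set t i j A \<notin> \<F>}"

lemma shift_movers_moved: "A \<in> shift_movers t i j \<F> \<Longrightarrow> shift_set t i j A \<noteq> A"
  by (auto simp: shift_movers_def)

lemma shift_family_eq_replace:
  assumes "i \<noteq> j"
  shows "shift_family t i j \<F> = (\<F> - shift_movers t i j \<F>) \<union> shift_set t i j ` shift_movers t i j \<F>"
  using shift_set_idem[OF assms] unfolding shift_family_def shift_movers_def by blast

lemma inj_on_shift_movers: "i \<noteq> j \<Longrightarrow> inj_on (shift_set t i j) (shift_movers t i j \<F>)"
proof (rule inj_onI)
  fix A B assume "i \<noteq> j" "A \<in> shift_movers t i j \<F>" "B \<in> shift_movers t i j \<F>"
    and eq: "shift_set t i j A = shift_set t i j B"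
  then have "A = insert (t, j) (shift_set t i j A - {(t, i)})"
    "B = insert (t, j) (shift_set t i j B - {(t, i)})"
    using shift_set_moved[OF shift_movers_moved] by blast+
  then show "A = B" using eq by simp
qed

lemma shift_family_changed_iff: "i \<noteq> j \<Longrightarrow> shift_family t i j \<F> \<noteq> \<F> \<longleftrightarrow> shift_movers t i j \<F> \<noteq> {}"
  by (auto simp: shift_family_eq_replace shift_movers_def)

lemma ex_shift_mover:
  assumes "shift_family t i j \<F> \<noteq> \<F>" "i \<noteq> j"
  obtains B where "B \<in> \<F>" "(t, j) \<in> B" "(t, i) \<notin> B"
proof -
  obtain B where "B \<in> shift_movers t i j \<F>"
    using assms by (auto simp: shift_family_changed_iff)
  then have "B \<in> \<F>" "shift_set t i j B \<noteq> B"
    by (auto simp: shift_movers_def)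
  then show thesis using that shift_set_moved(1,2) by metis
qed

lemma shift_family_fixed_closed: "shift_family t i j \<F> = \<F> \<Longrightarrow> A \<in> \<F> \<Longrightarrow> shift_set t i j A \<in> \<F>"
  unfolding shift_family_def by blast

lemma card_shift_family: "i \<noteq> j \<Longrightarrow> finite \<F> \<Longrightarrow> card (shift_family t i j \<F>) = card \<F>"
  unfolding shift_family_eq_replace
  by (rule card_replace_subfamily) (simp_all add: inj_on_shift_movers, auto simp: shift_movers_def)

lemma family_weight_shift_family_less:
  assumes "i < j" "finite \<F>" "\<forall>A\<in>\<F>. finite A" "shift_family t i j \<F> \<noteq> \<F>"
  shows "family_weight (shift_family t i j \<F>) < family_weight \<F>"
  unfolding shift_family_eq_replace[OF less_imp_neq[OF \<open>i < j\<close>]]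
proof (rule family_weight_replace_less)
  fix A assume A: "A \<in> shift_movers t i j \<F>"
  then have "finite A" using assms(3) by (simp add: shift_movers_def)
  then have "set_weight (shift_set t i j A) + j = set_weight A + i"
    using set_weight_shift_set shift_set_moved[OF shift_movers_moved[OF A]] by blast
  then show "set_weight (shift_set t i j A) < set_weight A" using assms(1) by simp
qed (use assms in \<open>simp_all add: inj_on_shift_movers shift_family_changed_iff,
      auto simp: shift_movers_def\<close>)

lemma intersecting_shift_family:
  assumes "intersecting \<F>"
  shows "intersecting (shift_family t i j \<F>)"
proof -
  have meet: "A \<inter> B \<noteq> {}" if "A \<in> \<F>" "B \<in> \<F>" for A B
    using assms that by (simp add: intersecting_def)
  have image_meets: "shift_set t i j A \<inter> Y \<noteq> {}"
    if A: "A \<in> \<F>" and Y: "Y \<in> shift_family t i j \<F>" for A Y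
    using Y unfolding shift_family_def
  proof (elim UnE imageE CollectE conjE)
    fix B assume "B \<in> \<F>" "Y = shift_set t i j B"
    then show ?thesis using shift_set_Int_shift_set[OF meet[OF A \<open>B \<in> \<F>\<close>]] by simp
  next
    assume "Y \<in> \<F>" "shift_set t i j Y \<in> \<F>"
    then show ?thesis using shift_set_Int meet A by simp
  qed
  have "X \<inter> Y \<noteq> {}" if X: "X \<in> shift_family t i j \<F>" and Y: "Y \<in> shift_family t i j \<F>" for X Y
  proof (cases "X \<in> \<F> \<and> Y \<in> \<F>")
    case True
    then show ?thesis using meet by blast
  next
    case False
    then consider A where "A \<in> \<F>" "X = shift_set t i j A" | B where "B \<in> \<F>" "Y = shift_set t i j B"
      using X Y unfolding shift_family_def by auto
    then show ?thesis
    proof cases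
      case 1
      then show ?thesis using image_meets Y by blast
    next
      case 2
      then show ?thesis using image_meets X by blast
    qed
  qed
  then show ?thesis by (simp add: intersecting_def)
qed

lemma shift_family_common_element:
  assumes "\<forall>B\<in>shift_family t i j \<F>. e \<in> B" and "A \<in> \<F>" "e \<notin> A"
  shows "e = (t, i)"
proof -
  have "e \<in> shift_set t i j A"
    using assms(1,2) by (simp add: shift_family_def)
  then show ?thesis using assms(3) shift_set_subset by blast
qed

lemma ex_max_then_min:
  fixes f g :: "'a \<Rightarrow> nat"
  assumes "finite C" "C \<noteq> {}"
  obtains x where "x \<in> C" "\<forall>y\<in>C. f y \<le> f x" "\<forall>y\<in>C. f y = f x \<longrightarrow> g x \<le> g y"
proof -
  define M where "M = {x \<in> C. f x = Max (f ` C)}"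
  have "Max (f ` C) \<in> f ` C"
    using assms by simp
  then have "M \<noteq> {}" "finite M"
    using assms(1) unfolding M_def by force+
  then obtain x where "is_arg_min g (\<lambda>x. x \<in> M) x"
    using ex_is_arg_min_if_finite by metis
  then have "x \<in> C" "f x = Max (f ` C)" "\<forall>y\<in>M. g x \<le> g y"
    by (auto simp: is_arg_min_def M_def not_less)
  then show thesis
    using that assms(1) by (simp add: M_def)
qed

section \<open>Lightest maximum non-trivially intersecting families\<close>

locale lightest_maximum_family =
  fixes p :: nat and n k :: "nat \<Rightarrow> nat" and \<F> :: "(nat \<times> nat) set set"
  assumes p_pos: "1 \<le> p"
    and k_range: "\<forall>s\<in>{1..p}. k s \<in> {1..n s}"
    and family: "\<F> \<subseteq> prodBinom p n k"
    and nontrivial: "nontrivially_intersecting p n \<F>"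
    and maximum: "\<And>\<G>. \<G> \<subseteq> prodBinom p n k \<Longrightarrow> nontrivially_intersecting p n \<G> \<Longrightarrow> card \<G> \<le> card \<F>"
    and lightest: "\<And>\<G>. \<G> \<subseteq> prodBinom p n k \<Longrightarrow> nontrivially_intersecting p n \<G> \<Longrightarrow>
      card \<G> = card \<F> \<Longrightarrow> family_weight \<F> \<le> family_weight \<G>"
begin

lemma finite_family: "finite \<F>"
  using finite_subset[OF family finite_prodBinom] .

lemma member_prodBinom: "A \<in> \<F> \<Longrightarrow> A \<in> prodBinom p n k"
  using family by blast

lemma member_memD:
  assumes "A \<in> \<F>" "(s, x) \<in> A"
  shows "s \<in> {1..p}" "x \<in> {1..n s}"
  using prodBinom_memD[OF member_prodBinom[OF assms(1)] assms(2)] by auto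

lemma finite_member: "A \<in> \<F> \<Longrightarrow> finite A"
  by (rule finite_prodBinom_member[OF member_prodBinom])

lemma members_meet: "A \<in> \<F> \<Longrightarrow> B \<in> \<F> \<Longrightarrow> A \<inter> B \<noteq> {}"
  using nontrivial by (simp add: nontrivially_intersecting_def intersecting_def)

lemma ex_member_avoiding:
  assumes "e \<in> ground p n"
  obtains A where "A \<in> \<F>" "e \<notin> A"
  using nontrivial assms by (auto simp: nontrivially_intersecting_def trivially_intersecting_def)

lemma family_nonempty: "\<F> \<noteq> {}"
proof -
  have "(1, 1) \<in> ground p n"
    using p_pos k_range by (force simp: ground_def)
  then obtain A where "A \<in> \<F>" by (rule ex_member_avoiding)
  then show ?thesis by blast
qed

lemma k_less_n:
  assumes s: "s \<in> {1..p}"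
  shows "k s < n s"
proof (rule ccontr)
  assume "\<not> k s < n s"
  then have "k s = n s" "1 \<le> n s" using k_range s by fastforce+
  then have "(s, 1) \<in> ground p n" using s by (simp add: ground_def)
  then obtain A where A: "A \<in> \<F>" "(s, 1) \<notin> A" by (rule ex_member_avoiding)
  have "part A s \<subseteq> {1..n s}"
    using prodBinom_memD(2)[OF member_prodBinom[OF A(1)]] by auto
  moreover have "card (part A s) = card {1..n s}"
    using prodBinom_card_part[OF member_prodBinom[OF A(1)] s] \<open>k s = n s\<close> by simp
  ultimately have "part A s = {1..n s}" by (simp add: card_subset_eq)
  then show False using A(2) \<open>1 \<le> n s\<close> by (metis atLeastAtMost_iff le_refl mem_part_iff)
qed

lemma mem_family_if_meets_all:
  assumes X: "X \<in> prodBinom p n k" and meets: "\<forall>A\<in>\<F>. X \<inter> A \<noteq> {}"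
  shows "X \<in> \<F>"
proof (rule ccontr)
  assume "X \<notin> \<F>"
  have "intersecting (insert X \<F>)"
    using meets members_meet family_nonempty unfolding intersecting_def
    by (auto simp: Int_commute)
  moreover have "\<not> trivially_intersecting p n (insert X \<F>)"
    using nontrivial by (auto simp: nontrivially_intersecting_def trivially_intersecting_def)
  ultimately have "card (insert X \<F>) \<le> card \<F>"
    using maximum[of "insert X \<F>"] X family by (simp add: nontrivially_intersecting_def)
  then show False using \<open>X \<notin> \<F>\<close> finite_family by simp
qed

lemma lighter_family_trivial:
  assumes "\<G> \<subseteq> prodBinom p n k" "intersecting \<G>" "card \<G> = card \<F>"
    and "family_weight \<G> < family_weight \<F>"
  obtains e where "e \<in> ground p n" "\<forall>A\<in>\<G>. e \<in> A"
proof -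
  have "\<not> nontrivially_intersecting p n \<G>"
    using lightest[of \<G>] assms by linarith
  then show thesis
    using that assms(2) by (auto simp: nontrivially_intersecting_def trivially_intersecting_def)
qed

section \<open>Shifts that change the family\<close>

definition shift_changes :: "nat \<Rightarrow> nat \<Rightarrow> nat \<Rightarrow> bool" where
  "shift_changes t i j \<longleftrightarrow> t \<in> {1..p} \<and> 1 \<le> i \<and> i < j \<and> j \<le> n t \<and> shift_family t i j \<F> \<noteq> \<F>"

lemma shift_changes_ground:
  assumes "shift_changes t i j"
  shows "(t, j) \<in> ground p n"
  using assms by (auto simp: shift_changes_def ground_def)

lemma shift_changes_center:
  assumes ch: "shift_changes t i j"
  shows "\<forall>B\<in>shift_family t i j \<F>. (t, i) \<in> B"
proof -
  have ij: "i \<noteq> j" using ch by (simp add: shift_changes_def)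
  have "shift_family t i j \<F> \<subseteq> prodBinom p n k"
    using ch family shift_set_prodBinom unfolding shift_changes_def shift_family_def by auto
  moreover have "intersecting (shift_family t i j \<F>)"
    using nontrivial intersecting_shift_family by (simp add: nontrivially_intersecting_def)
  moreover have "card (shift_family t i j \<F>) = card \<F>"
    using card_shift_family[OF ij finite_family] .
  moreover have "family_weight (shift_family t i j \<F>) < family_weight \<F>"
    using ch finite_family finite_member family_weight_shift_family_less
    by (simp add: shift_changes_def)
  ultimately obtain e where e: "e \<in> ground p n" "\<forall>B\<in>shift_family t i j \<F>. e \<in> B"
    by (rule lighter_family_trivial)
  obtain A where "A \<in> \<F>" "e \<notin> A" using ex_member_avoiding[OF e(1)] .
  then have "e = (t, i)" using shift_family_common_element e(2) by blast
  then show ?thesis using e(2) by simp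
qed

lemma shift_changes_cover:
  assumes "shift_changes t i j" "A \<in> \<F>"
  shows "(t, i) \<in> A \<or> (t, j) \<in> A"
proof (rule ccontr)
  assume "\<not> ((t, i) \<in> A \<or> (t, j) \<in> A)"
  moreover from this have "A \<in> shift_family t i j \<F>"
    using assms(2) by (auto simp: shift_family_def shift_set_def)
  ultimately show False using shift_changes_center[OF assms(1)] by blast
qed

lemma shift_changes_no_partner:
  assumes "shift_changes t i j" "A \<in> \<F>" "(t, j) \<in> A" "(t, i) \<notin> A"
  shows "shift_set t i j A \<notin> \<F>"
proof
  assume "shift_set t i j A \<in> \<F>"
  then have "A \<in> shift_family t i j \<F>"
    using assms(2) by (simp add: shift_family_def)
  then show False using shift_changes_center[OF assms(1)] assms(4) by blast
qed

lemma shift_changes_mover: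
  assumes "shift_changes t i j"
  obtains B where "B \<in> \<F>" "(t, j) \<in> B" "(t, i) \<notin> B"
  using assms ex_shift_mover[of t i j \<F>] by (auto simp: shift_changes_def)

text \<open>
  Lightest members on the two sides of the shift that satisfy P differ at some element away from
  (t, i) and (t, j); a shift there that fixes the family and preserves P would make one of them
  lighter.
\<close>

lemma shift_changes_exchange:
  assumes ch: "shift_changes t i j"
    and A: "A \<in> \<F>" "(t, i) \<in> A" "(t, j) \<notin> A" "P A"
    and B: "B \<in> \<F>" "(t, j) \<in> B" "(t, i) \<notin> B" "P B"
    and stable: "\<And>A B s a b x y. A \<in> \<F> \<Longrightarrow> B \<in> \<F> \<Longrightarrow> P A \<Longrightarrow> P B \<Longrightarrow>
      (s, a) \<in> A \<Longrightarrow> (s, a) \<notin> B \<Longrightarrow> (s, b) \<in> B \<Longrightarrow> (s, b) \<notin> A \<Longrightarrow>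
      (s, a) \<notin> {(t, i), (t, j)} \<Longrightarrow> (s, b) \<notin> {(t, i), (t, j)} \<Longrightarrow> {x, y} = {a, b} \<Longrightarrow> x < y \<Longrightarrow>
      shift_family s x y \<F> = \<F> \<and> (\<forall>X. P (shift_set s x y X) \<longleftrightarrow> P X)"
  shows False
proof -
  define \<A> where "\<A> = {A \<in> \<F>. (t, i) \<in> A \<and> (t, j) \<notin> A \<and> P A}"
  define \<B> where "\<B> = {B \<in> \<F>. (t, j) \<in> B \<and> (t, i) \<notin> B \<and> P B}"
  have "\<A> = {} \<or> \<B> = {}"
  proof (rule exchange_closed_pair_empty)
    show "finite \<A>" "finite \<B>"
      using finite_family by (simp_all add: \<A>_def \<B>_def)
    show "\<forall>A\<in>\<A> \<union> \<B>. finite A"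
      using finite_member by (auto simp: \<A>_def \<B>_def)
  next
    fix A B assume A: "A \<in> \<A>" and B: "B \<in> \<B>"
    then have A_in: "A \<in> \<F>" "(t, i) \<in> A" "(t, j) \<notin> A" "P A"
      and B_in: "B \<in> \<F>" "(t, j) \<in> B" "(t, i) \<notin> B" "P B"
      by (auto simp: \<A>_def \<B>_def)
    \<comment> \<open>compare A with the shift of B, which is not a member\<close>
    define B' where "B' = shift_set t i j B"
    have B': "B' = insert (t, i) (B - {(t, j)})"
      using B_in by (simp add: B'_def shift_set_exchange)
    have "B' \<in> prodBinom p n k"
      using ch member_prodBinom[OF B_in(1)] shift_set_prodBinom unfolding B'_def shift_changes_def
      by simp
    moreover have "A \<noteq> B'"
      using shift_changes_no_partner[OF ch B_in(1-3)] A_in(1) by (auto simp: B'_def)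
    ultimately obtain s a b where ab: "(s, a) \<in> A" "(s, a) \<notin> B'" "(s, b) \<in> B'" "(s, b) \<notin> A"
      using prodBinom_ex_differing_elements member_prodBinom[OF A_in(1)] by metis
    have away: "(s, a) \<notin> {(t, i), (t, j)}" "(s, b) \<notin> {(t, i), (t, j)}"
      using ab A_in B' by auto
    then have ab_B: "(s, a) \<notin> B" "(s, b) \<in> B"
      using ab B' by auto
    note stable_ab = stable[OF A_in(1) B_in(1) A_in(4) B_in(4) ab(1) ab_B ab(4) away]
    have "b < a \<longrightarrow> shift_set s b a A \<in> \<A>"
    proof
      assume "b < a"
      then have "shift_family s b a \<F> = \<F>" "P (shift_set s b a A)"
        using stable_ab[of b a] A_in(4) by auto
      moreover have "(t, i) \<in> shift_set s b a A" "(t, j) \<notin> shift_set s b a A"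
        using A_in away shift_set_subset[of s b a A] shift_set_supset[of A s a b] by auto
      ultimately show "shift_set s b a A \<in> \<A>"
        using shift_family_fixed_closed A_in(1) by (simp add: \<A>_def)
    qed
    moreover have "a < b \<longrightarrow> shift_set s a b B \<in> \<B>"
    proof
      assume "a < b"
      then have "shift_family s a b \<F> = \<F>" "P (shift_set s a b B)"
        using stable_ab[of a b] B_in(4) by auto
      moreover have "(t, j) \<in> shift_set s a b B" "(t, i) \<notin> shift_set s a b B"
        using B_in away shift_set_subset[of s a b B] shift_set_supset[of B s b a] by auto
      ultimately show "shift_set s a b B \<in> \<B>"
        using shift_family_fixed_closed B_in(1) by (simp add: \<B>_def)
    qed
    ultimately show "\<exists>s a b. (s, a) \<in> A \<and> (s, a) \<notin> B \<and> (s, b) \<in> B \<and> (s, b) \<notin> A \<and>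
        (b < a \<longrightarrow> shift_set s b a A \<in> \<A>) \<and> (a < b \<longrightarrow> shift_set s a b B \<in> \<B>)"
      using ab(1,4) ab_B by blast
  qed
  moreover have "A \<in> \<A>" "B \<in> \<B>"
    using A B by (simp_all add: \<A>_def \<B>_def)
  ultimately show False by blast
qed

lemma shift_changes_fixes_other_shifts:
  assumes ch: "shift_changes t i j" and k_t: "2 \<le> k t"
    and s: "s \<in> {1..p}" and xy: "1 \<le> x" "x < y" "y \<le> n s"
    and away: "(s, x) \<notin> {(t, i), (t, j)}" "(s, y) \<notin> {(t, i), (t, j)}"
  shows "shift_family s x y \<F> = \<F>"
proof (rule ccontr)
  assume "shift_family s x y \<F> \<noteq> \<F>"
  then have center: "\<forall>B\<in>shift_family s x y \<F>. (s, x) \<in> B"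
    using shift_changes_center s xy by (simp add: shift_changes_def)
  have t: "t \<in> {1..p}" and ij: "i \<in> {1..n t}" "j \<in> {1..n t}" "i \<noteq> j"
    using ch by (auto simp: shift_changes_def)
  \<comment> \<open>a set through (t, i) and (t, j) avoiding (s, x) lies in the family, and so does its shift\<close>
  define I where "I s' = (if s' = t then {i, j} else {})" for s'
  define E where "E s' = (if s' = s then {1..n s'} - {x} else {1..n s'})" for s'
  have "card (I s') \<le> k s' \<and> k s' \<le> card (E s')" if s': "s' \<in> {1..p}" for s'
    using k_t k_less_n[OF s'] xy by (auto simp: I_def E_def card_insert_if)
  moreover have "I s' \<subseteq> E s' \<and> E s' \<subseteq> {1..n s'}" for s'
    using ij away by (auto simp: I_def E_def)
  ultimately obtain X where X: "X \<in> prodBinom p n k"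
    "\<forall>s'\<in>{1..p}. I s' \<subseteq> part X s' \<and> part X s' \<subseteq> E s'"
    using ex_prodBinom_between[of p I E n k] by blast
  have "I t \<subseteq> part X t" "part X s \<subseteq> E s"
    using X(2) t s by blast+
  then have X_ij: "(t, i) \<in> X" "(t, j) \<in> X" and X_x: "(s, x) \<notin> X"
    by (auto simp: I_def E_def)
  have "Y \<in> \<F>" if "Y \<in> prodBinom p n k" "(t, i) \<in> Y" "(t, j) \<in> Y" for Y
  proof (rule mem_family_if_meets_all[OF that(1)], intro ballI)
    fix A assume "A \<in> \<F>"
    then show "Y \<inter> A \<noteq> {}" using shift_changes_cover[OF ch] that(2,3) by auto
  qed
  moreover have "shift_set s x y X \<in> prodBinom p n k"
    using shift_set_prodBinom[OF X(1) s] xy by simp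
  moreover have "(t, i) \<in> shift_set s x y X" "(t, j) \<in> shift_set s x y X"
    using X_ij away shift_set_supset[of X s y x] by auto
  ultimately have "X \<in> \<F>" "shift_set s x y X \<in> \<F>"
    using X(1) X_ij by blast+
  then have "X \<in> shift_family s x y \<F>" by (simp add: shift_family_def)
  then show False using center X_x by blast
qed

lemma shift_changes_k_eq_1:
  assumes ch: "shift_changes t i j"
  shows "k t = 1"
proof (rule ccontr)
  assume "k t \<noteq> 1"
  moreover have "t \<in> {1..p}" using ch by (simp add: shift_changes_def)
  ultimately have k_t: "2 \<le> k t" using k_range by fastforce
  obtain A where A: "A \<in> \<F>" "(t, j) \<notin> A"
    using ex_member_avoiding shift_changes_ground[OF ch] by blast
  then have "(t, i) \<in> A" using shift_changes_cover[OF ch] by blast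
  obtain B where B: "B \<in> \<F>" "(t, j) \<in> B" "(t, i) \<notin> B"
    using shift_changes_mover[OF ch] .
  show False
  proof (rule shift_changes_exchange[OF ch A(1) \<open>(t, i) \<in> A\<close> A(2) _ B, where P = "\<lambda>_. True"])
    fix A B s a b x y
    assume "A \<in> \<F>" "B \<in> \<F>" "(s, a) \<in> A" "(s, b) \<in> B"
      and away: "(s, a) \<notin> {(t, i), (t, j)}" "(s, b) \<notin> {(t, i), (t, j)}"
      and xy: "{x, y} = {a, b}" "x < y"
    moreover have "x \<in> {a, b}" "y \<in> {a, b}" using xy(1) by blast+
    ultimately have "s \<in> {1..p}" "x \<in> {1..n s}" "y \<in> {1..n s}"
      "(s, x) \<notin> {(t, i), (t, j)}" "(s, y) \<notin> {(t, i), (t, j)}"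
      using member_memD by blast+
    then show "shift_family s x y \<F> = \<F> \<and> (\<forall>X. True \<longleftrightarrow> True)"
      using shift_changes_fixes_other_shifts[OF ch k_t] xy(2) by simp
  qed simp_all
qed

lemma shift_changes_part:
  assumes ch: "shift_changes t i j" and A: "A \<in> \<F>"
  shows "part A t = {i} \<or> part A t = {j}"
proof -
  have "card (part A t) = 1"
    using prodBinom_card_part[OF member_prodBinom[OF A]] shift_changes_k_eq_1[OF ch] ch
    by (simp add: shift_changes_def)
  then obtain z where z: "part A t = {z}" by (rule card_1_singletonE)
  then have "z = i \<or> z = j"
    using shift_changes_cover[OF ch A] by auto
  then show ?thesis using z by blast
qed

lemma shift_changes_witnesses:
  assumes ch: "shift_changes t i j"
  obtains A B where "A \<in> \<F>" "part A t = {i}" "B \<in> \<F>" "part B t = {j}"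
proof -
  obtain A where A: "A \<in> \<F>" "(t, j) \<notin> A"
    using ex_member_avoiding shift_changes_ground[OF ch] by blast
  obtain B where B: "B \<in> \<F>" "(t, j) \<in> B" "(t, i) \<notin> B"
    using shift_changes_mover[OF ch] .
  have "j \<notin> part A t" "i \<notin> part B t"
    using A(2) B(3) by simp_all
  then have "part A t = {i}" "part B t = {j}"
    using shift_changes_part[OF ch A(1)] shift_changes_part[OF ch B(1)] by (metis singletonI)+
  then show thesis using that A(1) B(1) by blast
qed

lemma shift_changes_unique:
  assumes ch: "shift_changes t i j" and ch': "shift_changes t x y"
  shows "x = i \<and> y = j"
proof -
  obtain A B where "A \<in> \<F>" "part A t = {i}" "B \<in> \<F>" "part B t = {j}"
    using shift_changes_witnesses[OF ch] .
  then have "i \<in> {x, y}" "j \<in> {x, y}"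
    using shift_changes_part[OF ch'] by (metis insert_iff singleton_inject)+
  then show ?thesis
    using ch ch' by (auto simp: shift_changes_def)
qed

lemma shift_changes_if_escapes:
  assumes "t \<in> {1..p}" "1 \<le> x" "x < y" "y \<le> n t" "A \<in> \<F>" "shift_set t x y A \<notin> \<F>"
  shows "shift_changes t x y"
  using assms shift_family_fixed_closed[of t x y \<F> A] by (auto simp: shift_changes_def)

lemma shift_changes_1_2:
  assumes ch: "shift_changes t i j"
  shows "i = 1 \<and> j = 2"
proof -
  obtain A B where A: "A \<in> \<F>" "part A t = {i}" and B: "B \<in> \<F>" "part B t = {j}"
    using shift_changes_witnesses[OF ch] .
  have t: "t \<in> {1..p}" and ij: "1 \<le> i" "i < j" "j \<le> n t"
    using ch by (auto simp: shift_changes_def)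
  have escape: "shift_changes t c d"
    if "X \<in> \<F>" "part X t = {d}" "1 \<le> c" "c < d" "d \<le> n t" "c \<notin> {i, j}" for X c d
  proof (rule shift_changes_if_escapes[OF t that(3-5,1)])
    have "part (shift_set t c d X) t = {c}"
      using that(2,4) by (auto simp: shift_set_def set_eq_iff)
    then show "shift_set t c d X \<notin> \<F>"
      using shift_changes_part[OF ch] that(6) by fastforce
  qed
  have "i = 1"
  proof (rule ccontr)
    assume "i \<noteq> 1"
    then have "shift_changes t 1 i" using escape[OF A] ij by simp
    then show False using shift_changes_unique[OF ch] \<open>i \<noteq> 1\<close> by blast
  qed
  moreover have "j = 2"
  proof (rule ccontr)
    assume "j \<noteq> 2"
    then have "shift_changes t 2 j" using escape[OF B] ij \<open>i = 1\<close> by simp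
    then have "2 = i" using shift_changes_unique[OF ch] by blast
    then show False using \<open>i = 1\<close> by simp
  qed
  ultimately show ?thesis ..
qed

section \<open>Patterns on the unshifted parts\<close>

text \<open>By shift_changes_1_2, these are the parts t for which the family is not t-shifted.\<close>

definition unshifted_parts :: "nat set" where
  "unshifted_parts = {t. shift_changes t 1 2}"

definition pattern :: "(nat \<times> nat) set \<Rightarrow> nat set" where
  "pattern A = {u \<in> unshifted_parts. (u, 1) \<in> A}"

lemma unshifted_partsD:
  assumes "u \<in> unshifted_parts"
  shows "u \<in> {1..p}" "2 \<le> n u" "k u = 1"
proof -
  have ch: "shift_changes u 1 2" using assms by (simp add: unshifted_parts_def)
  then show "k u = 1" by (rule shift_changes_k_eq_1)
  show "u \<in> {1..p}" "2 \<le> n u" using ch by (simp_all add: shift_changes_def)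
qed

lemma finite_unshifted_parts: "finite unshifted_parts"
  by (rule finite_subset[of _ "{1..p}"]) (auto dest: unshifted_partsD)

lemma shift_changes_unshifted_part: "shift_changes t i j \<Longrightarrow> t \<in> unshifted_parts"
  using shift_changes_1_2 by (auto simp: unshifted_parts_def)

lemma shift_fixed_outside_unshifted:
  assumes "s \<in> {1..p}" "s \<notin> unshifted_parts" "1 \<le> x" "x < y" "y \<le> n s"
  shows "shift_family s x y \<F> = \<F>"
  using assms shift_changes_unshifted_part[of s x y] by (auto simp: shift_changes_def)

lemma unshifted_part_cases:
  assumes "u \<in> unshifted_parts" "A \<in> \<F>"
  shows "part A u = {1} \<or> part A u = {2}"
  using assms shift_changes_part by (simp add: unshifted_parts_def)

lemma unshifted_part_two_iff:
  assumes "u \<in> unshifted_parts" "A \<in> \<F>"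
  shows "(u, 2) \<in> A \<longleftrightarrow> (u, 1) \<notin> A"
proof -
  have "(\<forall>x. (u, x) \<in> A \<longleftrightarrow> x = 1) \<or> (\<forall>x. (u, x) \<in> A \<longleftrightarrow> x = 2)"
    using unshifted_part_cases[OF assms] unfolding part_eq_singleton_iff .
  then show ?thesis by force
qed

lemma unshifted_part_values:
  assumes "u \<in> unshifted_parts" "A \<in> \<F>" "(u, x) \<in> A"
  shows "x = 1 \<or> x = 2"
proof -
  have "(\<forall>x. (u, x) \<in> A \<longleftrightarrow> x = 1) \<or> (\<forall>x. (u, x) \<in> A \<longleftrightarrow> x = 2)"
    using unshifted_part_cases[OF assms(1,2)] unfolding part_eq_singleton_iff .
  then show ?thesis using assms(3) by blast
qed

lemma pattern_subset: "pattern A \<subseteq> unshifted_parts"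
  by (auto simp: pattern_def)

lemma pattern_shift_set:
  "s \<notin> unshifted_parts \<Longrightarrow> pattern (shift_set s x y A) = pattern A"
  by (auto simp: pattern_def shift_set_def)

lemma pattern_eq_if_eq_off:
  assumes A: "A \<in> \<F>" and B: "B \<in> \<F>" and off: "pattern A - {t} = pattern B - {t}"
  shows "pattern A = pattern B"
proof (rule ccontr)
  assume "pattern A \<noteq> pattern B"
  then have t: "t \<in> unshifted_parts" and "t \<in> pattern A \<longleftrightarrow> t \<notin> pattern B"
    using off pattern_subset by blast+
  then obtain X Y where XY: "X \<in> {A, B}" "Y \<in> {A, B}" "(t, 1) \<in> X" "(t, 1) \<notin> Y"
    by (auto simp: pattern_def)
  have ch: "shift_changes t 1 2" using t by (simp add: unshifted_parts_def)
  show False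
  proof (rule shift_changes_exchange[OF ch, where P = "\<lambda>X. pattern X - {t} = pattern A - {t}"])
    show "X \<in> \<F>" "(t, 1) \<in> X" "(t, 2) \<notin> X" "pattern X - {t} = pattern A - {t}"
      using XY A B off unshifted_part_two_iff[OF t] by auto
    show "Y \<in> \<F>" "(t, 2) \<in> Y" "(t, 1) \<notin> Y" "pattern Y - {t} = pattern A - {t}"
      using XY A B off unshifted_part_two_iff[OF t] by auto
  next
    fix X' Y' s a b x y
    assume members: "X' \<in> \<F>" "Y' \<in> \<F>"
      and patterns: "pattern X' - {t} = pattern A - {t}" "pattern Y' - {t} = pattern A - {t}"
      and ab: "(s, a) \<in> X'" "(s, a) \<notin> Y'" "(s, b) \<in> Y'"
      and away: "(s, a) \<notin> {(t, 1), (t, 2)}" and xy: "{x, y} = {a, b}" "x < y"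
    have "s \<notin> unshifted_parts"
    proof
      assume u: "s \<in> unshifted_parts"
      have "s \<noteq> t" using unshifted_part_values[OF u members(1) ab(1)] away by auto
      then have "(s, 1) \<in> X' \<longleftrightarrow> (s, 1) \<in> Y'"
        using patterns u by (auto simp: pattern_def set_eq_iff)
      then show False
        using unshifted_part_two_iff[OF u] unshifted_part_values[OF u] members ab by metis
    qed
    moreover have "x \<in> {a, b}" "y \<in> {a, b}" using xy(1) by blast+
    then have "s \<in> {1..p}" "x \<in> {1..n s}" "y \<in> {1..n s}"
      using members ab member_memD by blast+
    ultimately show "shift_family s x y \<F> = \<F> \<and>
        (\<forall>X. (pattern (shift_set s x y X) - {t} = pattern A - {t}) \<longleftrightarrow>
          (pattern X - {t} = pattern A - {t}))"
      using shift_fixed_outside_unshifted xy(2) pattern_shift_set by simp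
  qed
qed

lemma pattern_realized:
  assumes Q: "Q \<subseteq> unshifted_parts" and no_complement: "unshifted_parts - Q \<notin> pattern ` \<F>"
  shows "Q \<in> pattern ` \<F>"
proof -
  define I where "I s = (if s \<in> Q then {1} else if s \<in> unshifted_parts then {2::nat} else {})" for s
  define E where "E s = (if s \<in> unshifted_parts then I s else {1..n s})" for s
  have "I s \<subseteq> E s \<and> E s \<subseteq> {1..n s} \<and> card (I s) \<le> k s \<and> k s \<le> card (E s)" if s: "s \<in> {1..p}" for s
  proof (cases "s \<in> unshifted_parts")
    case True
    then show ?thesis using Q unshifted_partsD(2,3)[OF True] by (auto simp: I_def E_def)
  next
    case False
    then show ?thesis using Q k_range s by (auto simp: I_def E_def)
  qed
  then obtain X where X: "X \<in> prodBinom p n k" "\<forall>s\<in>{1..p}. I s \<subseteq> part X s \<and> part X s \<subseteq> E s"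
    using ex_prodBinom_between[of p I E n k] by blast
  have X_parts: "(u, 1) \<in> X \<longleftrightarrow> u \<in> Q" "(u, 2) \<in> X \<longleftrightarrow> u \<notin> Q" if u: "u \<in> unshifted_parts" for u
  proof -
    have "I u \<subseteq> part X u" "part X u \<subseteq> E u"
      using X(2) unshifted_partsD(1)[OF u] by blast+
    moreover have "E u = I u" using u by (simp add: E_def)
    ultimately have "I u \<subseteq> part X u" "part X u \<subseteq> I u" by simp_all
    then have "\<forall>x. (u, x) \<in> X \<longleftrightarrow> x \<in> I u"
      by (auto simp del: mem_part_iff simp: part_def)
    then show "(u, 1) \<in> X \<longleftrightarrow> u \<in> Q" "(u, 2) \<in> X \<longleftrightarrow> u \<notin> Q"
      using u by (simp_all add: I_def)
  qed
  have "X \<in> \<F>"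
  proof (rule mem_family_if_meets_all[OF X(1)], intro ballI)
    fix A assume A: "A \<in> \<F>"
    then have "pattern A \<noteq> unshifted_parts - Q" using no_complement by blast
    then obtain u where u: "u \<in> unshifted_parts" "(u, 1) \<in> A \<longleftrightarrow> u \<in> Q"
      using pattern_subset by (auto simp: pattern_def)
    then show "X \<inter> A \<noteq> {}"
      using X_parts[OF u(1)] unshifted_part_two_iff[OF u(1) A] by blast
  qed
  moreover have "pattern X = Q"
    using X_parts Q by (auto simp: pattern_def)
  ultimately show ?thesis by blast
qed

section \<open>Swapping 1 and 2 on the unshifted parts\<close>

definition swap_unshifted :: "nat \<times> nat \<Rightarrow> nat \<times> nat" where
  "swap_unshifted e =
    (fst e, if fst e \<in> unshifted_parts then Transposition.transpose 1 2 (snd e) else snd e)"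

definition flip_unshifted :: "(nat \<times> nat) set \<Rightarrow> (nat \<times> nat) set" where
  "flip_unshifted A = swap_unshifted ` A"

lemma swap_unshifted_involutory [simp]: "swap_unshifted (swap_unshifted e) = e"
  by (simp add: swap_unshifted_def)

lemma inj_swap_unshifted: "inj swap_unshifted"
  by (metis injI swap_unshifted_involutory)

lemma mem_flip_unshifted_iff: "e \<in> flip_unshifted A \<longleftrightarrow> swap_unshifted e \<in> A"
  unfolding flip_unshifted_def by (metis image_iff swap_unshifted_involutory)

lemma mem_flip_unshifted_Pair_iff:
  "(s, x) \<in> flip_unshifted A \<longleftrightarrow>
    (s, if s \<in> unshifted_parts then Transposition.transpose 1 2 x else x) \<in> A"
  by (simp add: mem_flip_unshifted_iff swap_unshifted_def)

lemma flip_unshifted_involutory [simp]: "flip_unshifted (flip_unshifted A) = A"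
  by (auto simp: mem_flip_unshifted_iff)

lemma inj_flip_unshifted: "inj flip_unshifted"
  by (metis injI flip_unshifted_involutory)

lemma flip_unshifted_Int: "flip_unshifted A \<inter> flip_unshifted B = flip_unshifted (A \<inter> B)"
  by (auto simp: mem_flip_unshifted_iff)

lemma part_flip_unshifted:
  "part (flip_unshifted A) s =
    (if s \<in> unshifted_parts then Transposition.transpose 1 2 ` part A s else part A s)"
  by (auto simp: mem_flip_unshifted_iff swap_unshifted_def in_transpose_image_iff)

lemma flip_unshifted_prodBinom:
  assumes A: "A \<in> prodBinom p n k"
  shows "flip_unshifted A \<in> prodBinom p n k"
proof -
  have "card (part (flip_unshifted A) s) = card (part A s)" for s
    by (simp add: part_flip_unshifted card_image)
  moreover have "flip_unshifted A \<subseteq> ground p n"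
  proof
    fix e assume e_flip: "e \<in> flip_unshifted A"
    obtain s x where e: "e = (s, x)" by (cases e)
    then have "(s, if s \<in> unshifted_parts then Transposition.transpose 1 2 x else x) \<in> A"
      using e_flip mem_flip_unshifted_Pair_iff by blast
    then have "s \<in> {1..p}"
      "(if s \<in> unshifted_parts then Transposition.transpose 1 2 x else x) \<in> {1..n s}"
      using prodBinom_memD[OF A] by blast+
    moreover have "2 \<le> n s" if "s \<in> unshifted_parts" using unshifted_partsD(2)[OF that] .
    ultimately show "e \<in> ground p n"
      using e by (auto simp: ground_def transpose_def split: if_splits)
  qed
  ultimately show ?thesis using A by (simp add: prodBinom_def)
qed

lemma pattern_flip_unshifted:
  assumes "A \<in> \<F>"
  shows "pattern (flip_unshifted A) = unshifted_parts - pattern A"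
  using unshifted_part_two_iff[OF _ assms]
  by (auto simp: pattern_def mem_flip_unshifted_iff swap_unshifted_def)

lemma set_weight_flip_unshifted:
  assumes A: "A \<in> \<F>"
  shows "set_weight (flip_unshifted A) + card (unshifted_parts - pattern A) =
    set_weight A + card (pattern A)"
proof -
  define ones where "ones = {e \<in> A. fst e \<in> unshifted_parts \<and> snd e = 1}"
  define twos where "twos = {e \<in> A. fst e \<in> unshifted_parts \<and> snd e = 2}"
  have fin: "finite A" using finite_member[OF A] .
  have pointwise: "snd (swap_unshifted e) + of_bool (e \<in> twos) = snd e + of_bool (e \<in> ones)"
    if "e \<in> A" for e
  proof (cases "fst e \<in> unshifted_parts")
    case True
    then have "snd e = 1 \<or> snd e = 2"
      using unshifted_part_values[OF True A] that by (metis prod.collapse)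
    then show ?thesis using True that by (auto simp: swap_unshifted_def ones_def twos_def)
  qed (auto simp: swap_unshifted_def ones_def twos_def)
  have "ones = (\<lambda>u. (u, 1)) ` pattern A"
    using A by (auto simp: ones_def pattern_def)
  then have card_ones: "card ones = card (pattern A)"
    by (simp add: card_image inj_on_def)
  have "twos = (\<lambda>u. (u, 2)) ` (unshifted_parts - pattern A)"
    using unshifted_part_two_iff[OF _ A] unshifted_part_values[OF _ A]
    by (auto simp: twos_def pattern_def)
  then have card_twos: "card twos = card (unshifted_parts - pattern A)"
    by (simp add: card_image inj_on_def)
  have "set_weight (flip_unshifted A) = (\<Sum>e\<in>A. snd (swap_unshifted e))"
    unfolding set_weight_def flip_unshifted_def
    using sum.reindex[OF inj_on_subset[OF inj_swap_unshifted subset_UNIV]] by simp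
  then have "set_weight (flip_unshifted A) + card twos =
      (\<Sum>e\<in>A. snd (swap_unshifted e) + of_bool (e \<in> twos))"
    using fin by (simp add: sum.distrib twos_def Int_def)
  also have "\<dots> = (\<Sum>e\<in>A. snd e + of_bool (e \<in> ones))"
    using pointwise by (rule sum.cong[OF refl])
  also have "\<dots> = set_weight A + card ones"
    using fin by (simp add: sum.distrib set_weight_def ones_def Int_def)
  finally show ?thesis using card_ones card_twos by simp
qed

lemma pattern_eq_if_disjoint_flip:
  assumes A: "A \<in> \<F>" and Y: "Y \<in> \<F>" and disjoint: "flip_unshifted A \<inter> Y = {}"
  shows "pattern Y = pattern A"
proof -
  have "(u, 1) \<in> Y \<longleftrightarrow> u \<in> pattern A" if u: "u \<in> unshifted_parts" for u
  proof -
    have "(u, 1) \<in> flip_unshifted A \<longleftrightarrow> u \<notin> pattern A"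
      using pattern_flip_unshifted[OF A] u by (auto simp: pattern_def)
    moreover have "(u, 2) \<in> flip_unshifted A \<longleftrightarrow> u \<in> pattern A"
      using u by (auto simp: mem_flip_unshifted_Pair_iff pattern_def)
    ultimately show ?thesis
      using disjoint unshifted_part_two_iff[OF u Y] by blast
  qed
  then show ?thesis using pattern_subset by (auto simp: pattern_def)
qed

lemma intersecting_flip_pattern_class:
  assumes \<H>: "\<H> = {A \<in> \<F>. pattern A = Q \<and> flip_unshifted A \<notin> \<F>}"
  shows "intersecting ((\<F> - \<H>) \<union> flip_unshifted ` \<H>)"
proof -
  have flip_meets: "flip_unshifted A \<inter> Y \<noteq> {}" if A: "A \<in> \<H>" and Y: "Y \<in> \<F> - \<H>" for A Y
  proof
    assume disjoint: "flip_unshifted A \<inter> Y = {}"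
    then have "pattern Y = Q"
      using pattern_eq_if_disjoint_flip A Y \<H> by blast
    then have "flip_unshifted Y \<in> \<F>" using Y \<H> by blast
    then have "A \<inter> flip_unshifted Y \<noteq> {}" using members_meet A \<H> by blast
    then have "flip_unshifted A \<inter> Y \<noteq> {}"
      using flip_unshifted_Int[of A "flip_unshifted Y"] by (auto simp: flip_unshifted_def)
    then show False using disjoint by simp
  qed
  have "X \<inter> Y \<noteq> {}"
    if X: "X \<in> (\<F> - \<H>) \<union> flip_unshifted ` \<H>" and Y: "Y \<in> (\<F> - \<H>) \<union> flip_unshifted ` \<H>" for X Y
  proof -
    consider "X \<in> \<F>" "Y \<in> \<F>"
      | A where "A \<in> \<H>" "X = flip_unshifted A" "Y \<in> \<F> - \<H>"
      | B where "B \<in> \<H>" "Y = flip_unshifted B" "X \<in> \<F> - \<H>"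
      | A B where "A \<in> \<H>" "B \<in> \<H>" "X = flip_unshifted A" "Y = flip_unshifted B"
      using X Y by blast
    then show ?thesis
    proof cases
      case 1
      then show ?thesis by (rule members_meet)
    next
      case 2
      then show ?thesis using flip_meets by blast
    next
      case 3
      then show ?thesis using flip_meets[of B X] by (auto simp: Int_commute)
    next
      case 4
      then have "A \<inter> B \<noteq> {}" using members_meet \<H> by blast
      then show ?thesis using 4 flip_unshifted_Int[of A B] by (auto simp: flip_unshifted_def)
    qed
  qed
  then show ?thesis by (simp add: intersecting_def)
qed

lemma flip_pattern_class_trivial:
  assumes Q: "Q \<subseteq> unshifted_parts" "card Q < card (unshifted_parts - Q)"
    and \<H>: "\<H> = {A \<in> \<F>. pattern A = Q \<and> flip_unshifted A \<notin> \<F>}" "\<H> \<noteq> {}"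
  obtains e where "e \<in> ground p n" "\<forall>X\<in>(\<F> - \<H>) \<union> flip_unshifted ` \<H>. e \<in> X"
proof (rule lighter_family_trivial)
  have sub: "\<H> \<subseteq> \<F>" and disj: "flip_unshifted ` \<H> \<inter> \<F> = {}"
    and inj: "inj_on flip_unshifted \<H>"
    using \<H>(1) inj_on_subset[OF inj_flip_unshifted] by auto
  show "(\<F> - \<H>) \<union> flip_unshifted ` \<H> \<subseteq> prodBinom p n k"
    using family sub flip_unshifted_prodBinom by blast
  show "intersecting ((\<F> - \<H>) \<union> flip_unshifted ` \<H>)"
    by (rule intersecting_flip_pattern_class[OF \<H>(1)])
  show "card ((\<F> - \<H>) \<union> flip_unshifted ` \<H>) = card \<F>"
    by (rule card_replace_subfamily[OF finite_family sub inj disj])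
  show "family_weight ((\<F> - \<H>) \<union> flip_unshifted ` \<H>) < family_weight \<F>"
  proof (rule family_weight_replace_less[OF finite_family sub inj disj \<H>(2)])
    fix A assume "A \<in> \<H>"
    then show "set_weight (flip_unshifted A) < set_weight A"
      using set_weight_flip_unshifted[of A] Q(2) \<H>(1) by auto
  qed
qed

lemma flip_center_unshifted:
  assumes "\<H> \<subseteq> \<F>" "e \<in> ground p n" "\<forall>X\<in>(\<F> - \<H>) \<union> flip_unshifted ` \<H>. e \<in> X"
  shows "fst e \<in> unshifted_parts"
proof (rule ccontr)
  assume "fst e \<notin> unshifted_parts"
  then have "swap_unshifted e = e" by (simp add: swap_unshifted_def)
  then have "e \<in> Y" if "Y \<in> \<F>" for Y
    using assms(3) that mem_flip_unshifted_iff[of e Y] by (cases "Y \<in> \<H>") auto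
  then show False using ex_member_avoiding[OF assms(2)] by metis
qed

lemma light_pattern_flip_mem:
  assumes two: "2 \<le> card unshifted_parts"
    and Q: "Q \<subseteq> unshifted_parts" "card Q < card (unshifted_parts - Q)"
    and A: "A \<in> \<F>" "pattern A = Q"
  shows "flip_unshifted A \<in> \<F>"
proof (rule ccontr)
  assume "flip_unshifted A \<notin> \<F>"
  define \<H> where "\<H> = {A \<in> \<F>. pattern A = Q \<and> flip_unshifted A \<notin> \<F>}"
  have A_H: "A \<in> \<H>" using A \<open>flip_unshifted A \<notin> \<F>\<close> by (simp add: \<H>_def)
  then obtain e where e: "e \<in> ground p n" "\<forall>X\<in>(\<F> - \<H>) \<union> flip_unshifted ` \<H>. e \<in> X"
    using flip_pattern_class_trivial[OF Q \<H>_def] by blast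
  have in_flips: "e \<in> flip_unshifted Y" if "Y \<in> \<H>" for Y using e(2) that by blast
  have in_others: "e \<in> Y" if "Y \<in> \<F>" "Y \<notin> \<H>" for Y using e(2) that by blast
  obtain u c where uc: "e = (u, c)" by (cases e)
  have u: "u \<in> unshifted_parts"
    using flip_center_unshifted[of \<H> e] e uc by (auto simp: \<H>_def)
  define c' where "c' = Transposition.transpose 1 2 c"
  have A_c': "(u, c') \<in> A"
    using in_flips[OF A_H] u by (simp add: uc c'_def mem_flip_unshifted_Pair_iff)
  \<comment> \<open>members through (u, c') miss e = (u, c), so they must be flipped\<close>
  have through_c'_flipped: "Y \<in> \<H>" if Y: "Y \<in> \<F>" "(u, c') \<in> Y" for Y
  proof (rule ccontr)
    assume "Y \<notin> \<H>"
    then have "(u, c) \<in> Y" using in_others Y(1) uc by blast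
    then show False
      using Y unshifted_part_values[OF u] unshifted_part_two_iff[OF u] A_c' A(1)
      by (auto simp: c'_def transpose_def split: if_splits)
  qed
  obtain v where v: "v \<in> unshifted_parts" "v \<noteq> u"
    using two u by (metis card_le_Suc0_iff_eq finite_unshifted_parts not_less_eq_eq numeral_2_eq_2)
  \<comment> \<open>Q' agrees with Q only at u, and its complement differs from Q only at u\<close>
  define Q' where "Q' = {w \<in> unshifted_parts. w \<in> Q \<longleftrightarrow> w = u}"
  have "Q' \<notin> pattern ` \<F>"
  proof
    assume "Q' \<in> pattern ` \<F>"
    then obtain Y where Y: "Y \<in> \<F>" "pattern Y = Q'" by blast
    then have "(u, 1) \<in> Y \<longleftrightarrow> (u, 1) \<in> A"
      using A u by (auto simp: pattern_def Q'_def)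
    then have "(u, c') \<in> Y"
      using A_c' unshifted_part_values[OF u] unshifted_part_two_iff[OF u] A(1) Y(1) by metis
    then have "pattern Y = Q" using through_c'_flipped Y(1) by (simp add: \<H>_def)
    then show False using Y(2) v by (auto simp: Q'_def set_eq_iff)
  qed
  then obtain X where X: "X \<in> \<F>" "pattern X = unshifted_parts - Q'"
    using pattern_realized[of "unshifted_parts - Q'"] by (auto simp: Q'_def Diff_Diff_Int)
  have "pattern X - {u} = pattern A - {u}"
    using X(2) A(2) Q by (auto simp: Q'_def)
  then have "pattern X = pattern A" using pattern_eq_if_eq_off X(1) A(1) by blast
  then show False using X(2) A(2) u by (auto simp: Q'_def set_eq_iff)
qed

lemma unshifted_parts_pattern_realized:
  assumes two: "2 \<le> card unshifted_parts"
  shows "unshifted_parts \<in> pattern ` \<F>"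
proof (cases "{} \<in> pattern ` \<F>")
  case True
  then obtain A where A: "A \<in> \<F>" "pattern A = {}" by blast
  moreover have "card {} < card (unshifted_parts - {})"
    using two by simp
  ultimately have "flip_unshifted A \<in> \<F>"
    using light_pattern_flip_mem[OF two, of "{}" A] by simp
  moreover have "pattern (flip_unshifted A) = unshifted_parts"
    using pattern_flip_unshifted A by simp
  ultimately show ?thesis by (metis image_eqI)
next
  case False
  then show ?thesis using pattern_realized[of unshifted_parts] by simp
qed

lemma card_unshifted_parts_less_2: "card unshifted_parts < 2"
proof (rule ccontr)
  assume "\<not> card unshifted_parts < 2"
  then have two: "2 \<le> card unshifted_parts" by simp
  then have "unshifted_parts \<noteq> {}" by auto
  then obtain t where t: "t \<in> unshifted_parts" by blast
  have "unshifted_parts \<in> pattern ` \<F>"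
    by (rule unshifted_parts_pattern_realized[OF two])
  then obtain A1 where A1: "A1 \<in> \<F>" "pattern A1 = unshifted_parts" by blast
  have "unshifted_parts - {t} \<notin> pattern ` \<F>"
  proof
    assume "unshifted_parts - {t} \<in> pattern ` \<F>"
    then obtain Y where "Y \<in> \<F>" "pattern Y = unshifted_parts - {t}" by blast
    moreover from this have "pattern Y - {t} = pattern A1 - {t}" using A1(2) by auto
    ultimately have "pattern Y = pattern A1" using pattern_eq_if_eq_off A1(1) by blast
    then show False using A1(2) \<open>pattern Y = unshifted_parts - {t}\<close> t by blast
  qed
  then obtain A2 where A2: "A2 \<in> \<F>" "pattern A2 = {t}"
    using pattern_realized[of "{t}"] t by (auto simp: Diff_Diff_Int)
  show False
  proof (cases "card unshifted_parts = 2")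
    case True
    then have "card (unshifted_parts - {t}) = 1"
      using t finite_unshifted_parts by (simp add: card_Diff_singleton)
    then obtain u where "unshifted_parts - {t} = {u}" by (rule card_1_singletonE)
    then have u: "unshifted_parts = {t, u}" "u \<noteq> t" using t by blast+
    have "pattern A2 - {u} = pattern A1 - {u}" using A1(2) A2(2) u by auto
    then have "pattern A2 = pattern A1" using pattern_eq_if_eq_off A1(1) A2(1) by blast
    then show False using A1(2) A2(2) u by auto
  next
    case False
    then have "card (pattern A2) < card (unshifted_parts - pattern A2)"
      using two t A2(2) finite_unshifted_parts by (simp add: card_Diff_singleton)
    then have "flip_unshifted A2 \<in> \<F>"
      using light_pattern_flip_mem[OF two pattern_subset _ A2(1) refl] by blast
    then show False
      using \<open>unshifted_parts - {t} \<notin> pattern ` \<F>\<close> pattern_flip_unshifted[OF A2(1)] A2(2) by auto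
  qed
qed

lemma unshifted_parts_empty: "unshifted_parts = {}"
proof (rule ccontr)
  assume "unshifted_parts \<noteq> {}"
  then have "card unshifted_parts = 1"
    using card_unshifted_parts_less_2 finite_unshifted_parts card_gt_0_iff[of unshifted_parts]
    by linarith
  then obtain t where "unshifted_parts = {t}" by (rule card_1_singletonE)
  then have t: "t \<in> unshifted_parts" by simp
  then have ch: "shift_changes t 1 2" by (simp add: unshifted_parts_def)
  obtain A B where A: "A \<in> \<F>" "part A t = {1}" and B: "B \<in> \<F>" "part B t = {2}"
    using shift_changes_witnesses[OF ch] .
  have "pattern A - {t} = pattern B - {t}"
    using \<open>unshifted_parts = {t}\<close> pattern_subset by blast
  then have "pattern A = pattern B" using pattern_eq_if_eq_off A(1) B(1) by blast
  moreover have "(t, 1) \<in> A" "(t, 1) \<notin> B"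
    using A(2) B(2) unfolding part_eq_singleton_iff by simp_all
  ultimately show False using t by (auto simp: pattern_def)
qed

lemma shifted_family: "shifted p n \<F>"
  unfolding shifted_def t_shifted_def
proof (intro ballI allI impI)
  fix t i j assume "t \<in> {1..p}" "1 \<le> i \<and> i < j \<and> j \<le> n t"
  then show "shift_family t i j \<F> = \<F>"
    using shift_changes_unshifted_part[of t i j] unshifted_parts_empty
    by (auto simp: shift_changes_def)
qed

end

theorem theorem2p1:
  fixes p :: nat and n k :: "nat \<Rightarrow> nat"
  assumes "p \<ge> 1"
    and "\<forall>s\<in>{1..p}. n s \<ge> 1"
    and "\<forall>s\<in>{1..p}. k s \<in> {1..n s}"
    and "\<exists>\<F>. \<F> \<subseteq> prodBinom p n k \<and> nontrivially_intersecting p n \<F>"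
  shows "\<exists>\<F>'. \<F>' \<subseteq> prodBinom p n k \<and> nontrivially_intersecting p n \<F>'
              \<and> (\<forall>\<G>. \<G> \<subseteq> prodBinom p n k \<and> nontrivially_intersecting p n \<G> \<longrightarrow> card \<G> \<le> card \<F>')
              \<and> shifted p n \<F>'"
proof -
  define \<C> where "\<C> = {\<G>. \<G> \<subseteq> prodBinom p n k \<and> nontrivially_intersecting p n \<G>}"
  have "finite \<C>"
    by (rule finite_subset[of _ "Pow (prodBinom p n k)"]) (auto simp: \<C>_def finite_prodBinom)
  moreover have "\<C> \<noteq> {}" using assms(4) by (auto simp: \<C>_def)
  ultimately obtain \<F> where "\<F> \<in> \<C>" and "\<forall>\<G>\<in>\<C>. card \<G> \<le> card \<F>"
    and "\<forall>\<G>\<in>\<C>. card \<G> = card \<F> \<longrightarrow> family_weight \<F> \<le> family_weight \<G>"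
    by (rule ex_max_then_min)
  then interpret lightest_maximum_family p n k \<F>
    using assms(1,3) unfolding \<C>_def by unfold_locales simp_all
  have "\<forall>\<G>. \<G> \<subseteq> prodBinom p n k \<and> nontrivially_intersecting p n \<G> \<longrightarrow> card \<G> \<le> card \<F>"
    using maximum by blast
  then show ?thesis
    using family nontrivial shifted_family by blast
qed

end
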